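(* There exists a probabilistic database that has the finite moments property but is not in $\mathsf{FO}(\mathsf{TI})$.
   Context: Fix a countably infinite universe $U$. A database schema $\tau$ is a finite nonempty set of relation symbols with arities; a $\tau$-fact is an expression $R(u_1,\dots,u_{\mathrm{ar}(R)})$ with $R\in\tau$, $u_i\in U$; a $\tau$-instance is a finite set of $\tau$-facts, and $\mathrm{adom}(D)$ is the set of elements of $U$occurring in $D$. A probabilistic database (PDB) of schema $\tau$ is a discrete probability space $(\mathbb{D},P)$ where $\mathbb{D}$ is a nonempty countable set of $\tau$-instances. The instance size is the random variable $D\mapsto |D|$ (number of facts). A PDB has the finite moments property if $\mathbb{E}(|\cdot|^k)=\sum_{D\in\mathbb{D}}|D|^kP(\{D\})<\infty$ for all $k\in\mathbb{N}_+$. A PDB $\mathcal{I}$ is tuple-independent (TI) if for all $k$ and all pairwise distinct facts $f_1,\dots,f_k$, $\Pr_{I\sim\mathcal I}(f_1\in I,\dots,f_k\in I)=\prod_i\Pr_{I\sim\mathcal I}(f_i\in I)$; $\mathsf{TI}$ is the class of all TI-PDBs. A view $V$ maps instances of an input schema to instances of an output schema; the image of a PDB $(\mathbb D,P)$ under $V$ is the PDB on $V(\mathbb D)$ with $P'(\{D'\})=P(\{D\in\mathbb D: V(D)=D'\})$. An FO-view consists of one first-order formula $\Phi_R(x_1,\dots,x_{\mathrm{ar}(R)})$ (constants from $U$ allowed) per output relation symbol $R$, evaluated under active domain semantics: quantifiers range over $\mathrm{adom}(D)$ together with the constants of the formula, and the output contains $R(\bar a)$ exactly for the tuples $\bar a$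 over this set with $D\models\Phi_R[\bar a]$. $\mathsf{FO}(\mathsf{TI})$ is the class of images of TI-PDBs under FO-views. *)

theory Defs
  imports "HOL-Probability.Probability"
begin

text \<open>Universe U: the natural numbers (a fixed countably infinite set).
  Relation symbols are named by natural numbers; a schema maps each of its
  (finitely many, at least one) relation symbols to its arity.\<close>

type_synonym schema = "nat \<rightharpoonup> nat"
type_synonym fact = "nat \<times> nat list"  (* R(u_1,...,u_k) as (R, [u_1,...,u_k]) *)
type_synonym db_instance = "fact set"

definition schema :: "schema \<Rightarrow> bool" where
  "schema \<tau> \<longleftrightarrow> finite (dom \<tau>) \<and> dom \<tau> \<noteq> {}"

definition is_fact :: "schema \<Rightarrow> fact \<Rightarrow> bool" where
  "is_fact \<tau> f \<longleftrightarrow> \<tau> (fst f) = Some (length (snd f))"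

definition is_instance :: "schema \<Rightarrow> db_instance \<Rightarrow> bool" where
  "is_instance \<tau> D \<longleftrightarrow> finite D \<and> (\<forall>f\<in>D. is_fact \<tau> f)"

definition adom :: "db_instance \<Rightarrow> nat set" where
  "adom D = (\<Union>f\<in>D. set (snd f))"

definition pdb :: "schema \<Rightarrow> db_instance pmf \<Rightarrow> bool" where
  "pdb \<tau> P \<longleftrightarrow> schema \<tau> \<and> (\<forall>D\<in>set_pmf P. is_instance \<tau> D)"

definition finite_moments :: "db_instance pmf \<Rightarrow> bool" where
  "finite_moments P \<longleftrightarrow>
     (\<forall>k::nat. k \<ge> 1 \<longrightarrow> (\<integral>\<^sup>+ D. ennreal (real (card D) ^ k) \<partial>measure_pmf P) < \<infinity>)"

text \<open>Tuple independence (finite sets of facts = pairwise distinct facts f_1..f_k).\<close>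
definition tuple_independent :: "db_instance pmf \<Rightarrow> bool" where
  "tuple_independent P \<longleftrightarrow>
     (\<forall>F::fact set. finite F \<longrightarrow>
        measure_pmf.prob P {I. F \<subseteq> I} = (\<Prod>f\<in>F. measure_pmf.prob P {I. f \<in> I}))"

definition TI :: "schema \<Rightarrow> db_instance pmf \<Rightarrow> bool" where
  "TI \<tau> P \<longleftrightarrow> pdb \<tau> P \<and> tuple_independent P"

datatype fo_term = FVar nat | FConst nat

datatype fo =
    FAtom nat "fo_term list"
  | FEq fo_term fo_term
  | FNeg fo
  | FAnd fo fo
  | FOr fo fo
  | FEx nat fo
  | FAll nat fo

fun tval :: "(nat \<Rightarrow> nat) \<Rightarrow> fo_term \<Rightarrow> nat" where
  "tval \<sigma> (FVar i) = \<sigma> i"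
| "tval \<sigma> (FConst c) = c"

fun tconsts :: "fo_term \<Rightarrow> nat set" where
  "tconsts (FVar i) = {}"
| "tconsts (FConst c) = {c}"

fun tvars :: "fo_term \<Rightarrow> nat set" where
  "tvars (FVar i) = {i}"
| "tvars (FConst c) = {}"

fun fo_consts :: "fo \<Rightarrow> nat set" where
  "fo_consts (FAtom R ts) = (\<Union>t\<in>set ts. tconsts t)"
| "fo_consts (FEq s t) = tconsts s \<union> tconsts t"
| "fo_consts (FNeg \<phi>) = fo_consts \<phi>"
| "fo_consts (FAnd \<phi> \<psi>) = fo_consts \<phi> \<union> fo_consts \<psi>"
| "fo_consts (FOr \<phi> \<psi>) = fo_consts \<phi> \<union> fo_consts \<psi>"
| "fo_consts (FEx x \<phi>) = fo_consts \<phi>"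
| "fo_consts (FAll x \<phi>) = fo_consts \<phi>"

fun fv :: "fo \<Rightarrow> nat set" where
  "fv (FAtom R ts) = (\<Union>t\<in>set ts. tvars t)"
| "fv (FEq s t) = tvars s \<union> tvars t"
| "fv (FNeg \<phi>) = fv \<phi>"
| "fv (FAnd \<phi> \<psi>) = fv \<phi> \<union> fv \<psi>"
| "fv (FOr \<phi> \<psi>) = fv \<phi> \<union> fv \<psi>"
| "fv (FEx x \<phi>) = fv \<phi> - {x}"
| "fv (FAll x \<phi>) = fv \<phi> - {x}"

fun wf_fo :: "schema \<Rightarrow> fo \<Rightarrow> bool" where
  "wf_fo \<tau> (FAtom R ts) = (\<tau> R = Some (length ts))"
| "wf_fo \<tau> (FEq s t) = True"
| "wf_fo \<tau> (FNeg \<phi>) = wf_fo \<tau> \<phi>"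
| "wf_fo \<tau> (FAnd \<phi> \<psi>) = (wf_fo \<tau> \<phi> \<and> wf_fo \<tau> \<psi>)"
| "wf_fo \<tau> (FOr \<phi> \<psi>) = (wf_fo \<tau> \<phi> \<and> wf_fo \<tau> \<psi>)"
| "wf_fo \<tau> (FEx x \<phi>) = wf_fo \<tau> \<phi>"
| "wf_fo \<tau> (FAll x \<phi>) = wf_fo \<tau> \<phi>"

fun sat :: "db_instance \<Rightarrow> nat set \<Rightarrow> (nat \<Rightarrow> nat) \<Rightarrow> fo \<Rightarrow> bool" where
  "sat D A \<sigma> (FAtom R ts) = ((R, map (tval \<sigma>) ts) \<in> D)"
| "sat D A \<sigma> (FEq s t) = (tval \<sigma> s = tval \<sigma> t)"
| "sat D A \<sigma> (FNeg \<phi>) = (\<not> sat D A \<sigma> \<phi>)"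
| "sat D A \<sigma> (FAnd \<phi> \<psi>) = (sat D A \<sigma> \<phi> \<and> sat D A \<sigma> \<psi>)"
| "sat D A \<sigma> (FOr \<phi> \<psi>) = (sat D A \<sigma> \<phi> \<or> sat D A \<sigma> \<psi>)"
| "sat D A \<sigma> (FEx x \<phi>) = (\<exists>a\<in>A. sat D A (\<sigma>(x := a)) \<phi>)"
| "sat D A \<sigma> (FAll x \<phi>) = (\<forall>a\<in>A. sat D A (\<sigma>(x := a)) \<phi>)"

text \<open>An FO-view from tau to tau': one formula Phi R per output symbol R, with
  free variables among x_1..x_ar(R) (represented as variables 0..ar(R)-1).\<close>
definition fo_view :: "schema \<Rightarrow> schema \<Rightarrow> (nat \<Rightarrow> fo) \<Rightarrow> bool" where
  "fo_view \<tau> \<tau>' \<Phi> \<longleftrightarrow> schema \<tau> \<and> schema \<tau>' \<and>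
     (\<forall>R k. \<tau>' R = Some k \<longrightarrow> wf_fo \<tau> (\<Phi> R) \<and> fv (\<Phi> R) \<subseteq> {..<k})"

definition apply_view :: "schema \<Rightarrow> (nat \<Rightarrow> fo) \<Rightarrow> db_instance \<Rightarrow> db_instance" where
  "apply_view \<tau>' \<Phi> D =
     {(R, as) | R as. \<tau>' R = Some (length as) \<and>
        set as \<subseteq> adom D \<union> fo_consts (\<Phi> R) \<and>
        sat D (adom D \<union> fo_consts (\<Phi> R)) (\<lambda>i. as ! i) (\<Phi> R)}"

definition in_FO_TI :: "schema \<Rightarrow> db_instance pmf \<Rightarrow> bool" where
  "in_FO_TI \<tau>' P' \<longleftrightarrow>
     (\<exists>\<tau> P \<Phi>. TI \<tau> P \<and> fo_view \<tau> \<tau>' \<Phi> \<and> P' = map_pmf (apply_view \<tau>' \<Phi>) P)"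

end

theory Submission
  imports Defs "HOL-Library.Discrete_Functions" "HOL-Real_Asymp.Real_Asymp"
begin

(* In a tuple-independent PDB the marginal probabilities p f of the facts have bounded sums:
   with probability > 1/2 the instance lies inside a fixed finite set of facts, while it avoids
   a finite set G of facts with probability prod_G (1 - p) <= exp (- sum_G p).  Since
   E[2^|D \<inter> A|] = prod_A (1 + p) <= exp (sum_A p), monotone convergence gives E[2^|D|] < \<infinity>,
   and by Markov's inequality P(|D| >= m) = O(2^-m).  An FO-view enlarges instances only
   polynomially, so every PDB in FO(TI) satisfies P(|D'| > C (m+1)^K) = O(2^-m).  The PDB whose
   instance has size 2^(floor_sqrt n) with probability 2^-(n+1) has all moments finite, but it
   puts probability 2^-(j^2+1) on sizes >= 2^j, which violates this bound at m = 2 j^2. *)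

section \<open>Tuple-independent PDBs have exponentially small size tails\<close>

definition enum_prefix :: "nat \<Rightarrow> 'a::countable set" where
  "enum_prefix i = {x. to_nat x < i}"

lemma finite_enum_prefix: "finite (enum_prefix i)"
proof -
  have "enum_prefix i = to_nat -` {..<i}" by (auto simp: enum_prefix_def)
  then show ?thesis by (metis finite_lessThan finite_vimageI inj_to_nat)
qed

lemma enum_prefix_mono: "i \<le> j \<Longrightarrow> enum_prefix i \<subseteq> enum_prefix j"
  by (auto simp: enum_prefix_def)

lemma finite_subset_enum_prefix: "finite A \<Longrightarrow> \<exists>i. A \<subseteq> enum_prefix i"
  by (auto simp: enum_prefix_def intro!: exI[of _ "Suc (Max (to_nat ` A))"] le_imp_less_Suc)

lemma prob_subset_enum_prefix_tendsto:
  fixes P :: "'a::countable set pmf"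
  assumes "\<And>D. D \<in> set_pmf P \<Longrightarrow> finite D"
  shows "(\<lambda>i. measure_pmf.prob P {D. D \<subseteq> enum_prefix i}) \<longlonglongrightarrow> 1"
proof -
  have "incseq (\<lambda>i. {D. D \<subseteq> enum_prefix i})"
    unfolding incseq_def using enum_prefix_mono by blast
  moreover have "set_pmf P \<subseteq> (\<Union>i. {D. D \<subseteq> enum_prefix i})"
    using assms finite_subset_enum_prefix by blast
  then have "measure_pmf.prob P (\<Union>i. {D. D \<subseteq> enum_prefix i}) = 1"
    by (simp add: measure_pmf.prob_eq_1 AE_measure_pmf_iff subset_eq)
  ultimately show ?thesis
    using measure_pmf.finite_Lim_measure_incseq[where M = P] by fastforce
qed

lemma two_power_card_Int_eq_sum_indicator:
  assumes "finite A"
  shows "ennreal (2 ^ card (D \<inter> A)) = (\<Sum>F\<in>Pow A. indicator {I. F \<subseteq> I} D)"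
proof -
  have "(\<Sum>F\<in>Pow A. indicator {I. F \<subseteq> I} D :: ennreal) = (\<Sum>F\<in>{F\<in>Pow A. F \<subseteq> D}. 1)"
    using assms by (simp add: sum.inter_filter[symmetric] indicator_def Pow_def Collect_conj_eq)
  also have "{F\<in>Pow A. F \<subseteq> D} = Pow (D \<inter> A)" by auto
  also have "(\<Sum>F\<in>Pow (D \<inter> A). 1 :: ennreal) = of_nat (2 ^ card (D \<inter> A))"
    using assms by (simp add: card_Pow del: Pow_Int_eq)
  finally show ?thesis by (metis ennreal_of_nat_eq_real_of_nat of_nat_numeral of_nat_power)
qed

locale ti_pdb =
  fixes P :: "db_instance pmf"
  assumes tuple_independent: "tuple_independent P"
    and finite_instances: "\<And>D. D \<in> set_pmf P \<Longrightarrow> finite D"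
begin

definition marginal :: "fact \<Rightarrow> real" where
  "marginal f = measure_pmf.prob P {I. f \<in> I}"

lemma marginal_nonneg: "0 \<le> marginal f"
  and marginal_le_1: "marginal f \<le> 1"
  by (auto simp: marginal_def)

lemma prob_superset: "finite F \<Longrightarrow> measure_pmf.prob P {I. F \<subseteq> I} = (\<Prod>f\<in>F. marginal f)"
  using tuple_independent unfolding tuple_independent_def marginal_def by blast

lemma prob_superset_disjoint:
  assumes "finite G" "finite H" "H \<inter> G = {}"
  shows "measure_pmf.prob P {I. H \<subseteq> I \<and> I \<inter> G = {}}
           = (\<Prod>f\<in>H. marginal f) * (\<Prod>f\<in>G. 1 - marginal f)"
  using assms
proof (induction G arbitrary: H rule: finite_induct)
  case empty
  then show ?case using prob_superset[of H] by simp
next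
  case (insert g G)
  have "{I. H \<subseteq> I \<and> I \<inter> insert g G = {}} =
          {I. H \<subseteq> I \<and> I \<inter> G = {}} - {I. insert g H \<subseteq> I \<and> I \<inter> G = {}}"
    by auto
  then have "measure_pmf.prob P {I. H \<subseteq> I \<and> I \<inter> insert g G = {}} =
      measure_pmf.prob P {I. H \<subseteq> I \<and> I \<inter> G = {}}
      - measure_pmf.prob P {I. insert g H \<subseteq> I \<and> I \<inter> G = {}}"
    by (simp add: measure_pmf.finite_measure_Diff subset_eq)
  also have "\<dots> = (\<Prod>f\<in>H. marginal f) * (\<Prod>f\<in>G. 1 - marginal f)
                 - (\<Prod>f\<in>insert g H. marginal f) * (\<Prod>f\<in>G. 1 - marginal f)"
    using insert.IH[of H] insert.IH[of "insert g H"] insert.prems insert.hyps by simp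
  also have "\<dots> = (\<Prod>f\<in>H. marginal f) * (\<Prod>f\<in>insert g G. 1 - marginal f)"
    using insert by (simp add: algebra_simps)
  finally show ?case .
qed

lemma prob_disjoint_le_exp:
  assumes "finite G"
  shows "measure_pmf.prob P {I. I \<inter> G = {}} \<le> exp (- sum marginal G)"
proof -
  have "measure_pmf.prob P {I. I \<inter> G = {}} = (\<Prod>f\<in>G. 1 - marginal f)"
    using prob_superset_disjoint[OF assms, of "{}"] by simp
  also have "\<dots> \<le> (\<Prod>f\<in>G. exp (- marginal f))"
    by (intro prod_mono) (auto simp: marginal_le_1 exp_ge_add_one_self[of "- marginal _", simplified])
  also have "\<dots> = exp (- sum marginal G)"
    by (simp add: exp_sum[OF assms, symmetric] sum_negf)
  finally show ?thesis .
qed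

lemma bounded_marginal_sums:
  obtains B where "\<And>A. finite A \<Longrightarrow> sum marginal A \<le> B"
proof -
  have "(1/2 :: real) < 1" by simp
  with prob_subset_enum_prefix_tendsto[OF finite_instances]
  have "eventually (\<lambda>i. 1/2 < measure_pmf.prob P {D. D \<subseteq> enum_prefix i}) sequentially"
    by (rule order_tendstoD(1))
  then obtain i where i: "1/2 < measure_pmf.prob P {D. D \<subseteq> enum_prefix i}"
    using eventually_happens'[OF sequentially_bot] by blast
  have outside: "sum marginal G < 1" if G: "finite G" "G \<inter> enum_prefix i = {}" for G
  proof (rule ccontr)
    assume "\<not> sum marginal G < 1"
    then have "measure_pmf.prob P {I. I \<inter> G = {}} \<le> exp (-1)"
      using prob_disjoint_le_exp[OF G(1)] by (meson exp_le_cancel_iff neg_le_iff_le not_le order.trans)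
    also have "exp (-1) \<le> (1/2 :: real)"
      using exp_ge_add_one_self[of 1] by (simp add: exp_minus field_simps)
    moreover have "measure_pmf.prob P {D. D \<subseteq> enum_prefix i} \<le> measure_pmf.prob P {I. I \<inter> G = {}}"
      using G(2) by (intro measure_pmf.finite_measure_mono) auto
    ultimately show False using i by linarith
  qed
  show thesis
  proof
    fix A :: "fact set"
    assume A: "finite A"
    have "sum marginal A = sum marginal (A \<inter> enum_prefix i) + sum marginal (A - enum_prefix i)"
      using A by (rule sum.Int_Diff)
    also have "\<dots> \<le> sum marginal (enum_prefix i) + 1"
    proof (rule add_mono)
      show "sum marginal (A \<inter> enum_prefix i) \<le> sum marginal (enum_prefix i)"
        by (rule sum_mono2) (auto simp: finite_enum_prefix marginal_nonneg)
      show "sum marginal (A - enum_prefix i) \<le> 1"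
        using outside[of "A - enum_prefix i"] A by fastforce
    qed
    finally show "sum marginal A \<le> sum marginal (enum_prefix i) + 1" .
  qed
qed

lemma exp_moment_Int_le:
  assumes A: "finite A"
  shows "(\<integral>\<^sup>+ D. ennreal (2 ^ card (D \<inter> A)) \<partial>measure_pmf P) \<le> ennreal (exp (sum marginal A))"
proof -
  have "(\<integral>\<^sup>+ D. ennreal (2 ^ card (D \<inter> A)) \<partial>measure_pmf P)
      = (\<Sum>F\<in>Pow A. \<integral>\<^sup>+ D. indicator {I. F \<subseteq> I} D \<partial>measure_pmf P)"
    using A by (simp add: two_power_card_Int_eq_sum_indicator nn_integral_sum)
  also have "\<dots> = (\<Sum>F\<in>Pow A. ennreal (\<Prod>f\<in>F. marginal f))"
  proof (rule sum.cong)
    fix F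
    assume "F \<in> Pow A"
    then have "finite F" using A finite_subset by auto
    then show "(\<integral>\<^sup>+ D. indicator {I. F \<subseteq> I} D \<partial>measure_pmf P) = ennreal (\<Prod>f\<in>F. marginal f)"
      by (simp add: measure_pmf.emeasure_eq_measure prob_superset)
  qed simp
  also have "\<dots> = ennreal (\<Prod>f\<in>A. marginal f + 1)"
    by (simp add: prod_add[OF A, of marginal "\<lambda>_. 1"] prod_nonneg marginal_nonneg)
  also have "(\<Prod>f\<in>A. marginal f + 1) \<le> (\<Prod>f\<in>A. exp (marginal f))"
    by (intro prod_mono) (auto simp: marginal_nonneg add.commute[of _ 1]
        intro: add_nonneg_nonneg)
  also have "\<dots> = exp (sum marginal A)"
    by (simp add: exp_sum[OF A])
  finally show ?thesis by (simp add: ennreal_leI)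
qed

lemma exp_moment_finite: "(\<integral>\<^sup>+ D. ennreal (2 ^ card D) \<partial>measure_pmf P) < \<infinity>"
proof -
  obtain B where B: "\<And>A. finite A \<Longrightarrow> sum marginal A \<le> B"
    using bounded_marginal_sums by blast
  define f where "f i D = ennreal (2 ^ card (D \<inter> enum_prefix i))" for i and D :: db_instance
  have "incseq f"
  proof (intro incseq_SucI le_funI)
    fix i and D :: db_instance
    have "card (D \<inter> enum_prefix i) \<le> card (D \<inter> enum_prefix (Suc i))"
      using enum_prefix_mono[of i "Suc i"] by (intro card_mono) (auto simp: finite_enum_prefix)
    then show "f i D \<le> f (Suc i) D"
      unfolding f_def by (intro ennreal_leI) simp
  qed
  have "(\<integral>\<^sup>+ D. ennreal (2 ^ card D) \<partial>measure_pmf P) \<le> (\<integral>\<^sup>+ D. (SUP i. f i D) \<partial>measure_pmf P)"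
  proof (intro nn_integral_mono_AE, unfold AE_measure_pmf_iff, intro ballI)
    fix D
    assume "D \<in> set_pmf P"
    then obtain i where "D \<subseteq> enum_prefix i"
      using finite_subset_enum_prefix finite_instances by blast
    then have "ennreal (2 ^ card D) = f i D"
      unfolding f_def by (simp add: Int_absorb2)
    also have "\<dots> \<le> (SUP i. f i D)" by (rule SUP_upper) simp
    finally show "ennreal (2 ^ card D) \<le> (SUP i. f i D)" .
  qed
  also have "\<dots> = (SUP i. \<integral>\<^sup>+ D. f i D \<partial>measure_pmf P)"
    by (rule nn_integral_monotone_convergence_SUP[OF \<open>incseq f\<close>]) simp
  also have "\<dots> \<le> ennreal (exp B)"
  proof (rule SUP_least)
    fix i
    have "(\<integral>\<^sup>+ D. f i D \<partial>measure_pmf P) \<le> ennreal (exp (sum marginal (enum_prefix i)))"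
      unfolding f_def by (rule exp_moment_Int_le[OF finite_enum_prefix])
    also have "\<dots> \<le> ennreal (exp B)"
      using B[OF finite_enum_prefix] by (simp add: ennreal_leI)
    finally show "(\<integral>\<^sup>+ D. f i D \<partial>measure_pmf P) \<le> ennreal (exp B)" .
  qed
  finally show ?thesis using order.strict_trans1 by fastforce
qed

lemma card_tail_bound:
  obtains M where "\<And>m. measure_pmf.prob P {D. m \<le> card D} \<le> M / 2 ^ m"
proof -
  define E where "E = (\<integral>\<^sup>+ D. ennreal (2 ^ card D) \<partial>measure_pmf P)"
  have "measure_pmf.prob P {D. m \<le> card D} \<le> enn2real E / 2 ^ m" for m
  proof -
    have "ennreal (2 ^ m) * emeasure P {D. m \<le> card D}
        = (\<integral>\<^sup>+ D. ennreal (2 ^ m) * indicator {D. m \<le> card D} D \<partial>measure_pmf P)"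
      by (simp add: nn_integral_cmult_indicator)
    also have "\<dots> \<le> E"
      unfolding E_def by (intro nn_integral_mono) (auto simp: indicator_def intro: ennreal_leI)
    also have "E = ennreal (enn2real E)"
      using exp_moment_finite by (simp add: E_def less_top)
    finally have "2 ^ m * measure_pmf.prob P {D. m \<le> card D} \<le> enn2real E"
      by (simp add: measure_pmf.emeasure_eq_measure flip: ennreal_mult)
    then show ?thesis by (simp add: field_simps)
  qed
  then show thesis by (rule that)
qed

end

section \<open>FO-views enlarge instances polynomially\<close>

lemma finite_tconsts: "finite (tconsts t)"
  by (cases t) auto

lemma finite_fo_consts: "finite (fo_consts \<phi>)"
  by (induction \<phi>) (auto simp: finite_tconsts)

lemma schema_arity_bound:
  assumes "schema \<tau>"
  obtains a where "\<And>R k. \<tau> R = Some k \<Longrightarrow> k \<le> a"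
proof -
  have "finite (ran \<tau>)" using assms by (simp add: schema_def finite_ran)
  then show thesis by (meson Max_ge ranI that)
qed

lemma card_adom_le:
  assumes "finite D" and "\<And>f. f \<in> D \<Longrightarrow> length (snd f) \<le> a"
  shows "card (adom D) \<le> a * card D"
proof -
  have "card (adom D) \<le> (\<Sum>f\<in>D. card (set (snd f)))"
    unfolding adom_def by (rule card_UN_le[OF assms(1)])
  also have "\<dots> \<le> (\<Sum>f\<in>D. a)"
    using assms(2) by (intro sum_mono) (meson card_length le_trans)
  finally show ?thesis by (simp add: mult.commute)
qed

lemma card_lists_length_le_bound:
  assumes "finite X"
  shows "card {xs. set xs \<subseteq> X \<and> length xs \<le> k} \<le> (k + 1) * (card X + 1) ^ k"
proof -
  have "card {xs. set xs \<subseteq> X \<and> length xs \<le> k} = (\<Sum>i\<le>k. card X ^ i)"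
    by (rule card_lists_length_le[OF assms])
  also have "\<dots> \<le> (\<Sum>i\<le>k. (card X + 1) ^ k)"
    by (intro sum_mono order.trans[OF power_mono power_increasing]) auto
  finally show ?thesis by simp
qed

lemma card_apply_view_poly_bound:
  assumes "fo_view \<tau> \<tau>' \<Phi>"
  obtains C K where "\<And>D. is_instance \<tau> D \<Longrightarrow> card (apply_view \<tau>' \<Phi> D) \<le> C * (card D + 1) ^ K"
proof -
  have "schema \<tau>" "schema \<tau>'" using assms by (auto simp: fo_view_def)
  obtain a where a: "\<And>R k. \<tau> R = Some k \<Longrightarrow> k \<le> a"
    using schema_arity_bound[OF \<open>schema \<tau>\<close>] by blast
  obtain K where K: "\<And>R k. \<tau>' R = Some k \<Longrightarrow> k \<le> K"
    using schema_arity_bound[OF \<open>schema \<tau>'\<close>] by blast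
  define Cs where "Cs = (\<Union>R\<in>dom \<tau>'. fo_consts (\<Phi> R))"
  have fin_dom: "finite (dom \<tau>')" using \<open>schema \<tau>'\<close> by (simp add: schema_def)
  then have "finite Cs" unfolding Cs_def by (simp add: finite_fo_consts)
  define c where "c = a + card Cs + 1"
  show thesis
  proof (rule that)
    fix D
    assume D: "is_instance \<tau> D"
    define X where "X = adom D \<union> Cs"
    have "finite (adom D)" using D by (simp add: is_instance_def adom_def)
    then have "finite X" using \<open>finite Cs\<close> by (simp add: X_def)
    have "card (adom D) \<le> a * card D"
      using D a by (intro card_adom_le) (auto simp: is_instance_def is_fact_def)
    then have "card X + 1 \<le> c * (card D + 1)"
      using card_Un_le[of "adom D" Cs] by (simp add: X_def c_def algebra_simps)
    have "apply_view \<tau>' \<Phi> D \<subseteq> dom \<tau>' \<times> {xs. set xs \<subseteq> X \<and> length xs \<le> K}"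
      unfolding apply_view_def X_def Cs_def using K by fastforce
    then have "card (apply_view \<tau>' \<Phi> D) \<le> card (dom \<tau>') * card {xs. set xs \<subseteq> X \<and> length xs \<le> K}"
      using fin_dom \<open>finite X\<close> by (metis card_cartesian_product card_mono finite_SigmaI finite_lists_length_le)
    also have "\<dots> \<le> card (dom \<tau>') * ((K + 1) * (card X + 1) ^ K)"
      using card_lists_length_le_bound[OF \<open>finite X\<close>] by simp
    also have "\<dots> \<le> card (dom \<tau>') * ((K + 1) * (c * (card D + 1)) ^ K)"
      using \<open>card X + 1 \<le> c * (card D + 1)\<close> by (intro mult_le_mono2 power_mono) simp_all
    also have "\<dots> = card (dom \<tau>') * (K + 1) * c ^ K * (card D + 1) ^ K"
      unfolding power_mult_distrib by (simp only: mult.assoc)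
    finally show "card (apply_view \<tau>' \<Phi> D) \<le> card (dom \<tau>') * (K + 1) * c ^ K * (card D + 1) ^ K" .
  qed
qed

lemma in_FO_TI_tail_bound:
  assumes "in_FO_TI \<tau>' P'"
  obtains C K M where "\<And>m. measure_pmf.prob P' {D'. C * (m + 1) ^ K < card D'} \<le> M / 2 ^ m"
proof -
  obtain \<tau> P \<Phi> where TI: "TI \<tau> P" and V: "fo_view \<tau> \<tau>' \<Phi>"
    and P': "P' = map_pmf (apply_view \<tau>' \<Phi>) P"
    using assms unfolding in_FO_TI_def by blast
  have inst: "is_instance \<tau> D" if "D \<in> set_pmf P" for D
    using TI that by (auto simp: TI_def pdb_def)
  interpret ti_pdb P
    using TI inst by unfold_locales (auto simp: TI_def is_instance_def)
  obtain C K where CK: "\<And>D. is_instance \<tau> D \<Longrightarrow> card (apply_view \<tau>' \<Phi> D) \<le> C * (card D + 1) ^ K"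
    using card_apply_view_poly_bound[OF V] by blast
  obtain M where M: "\<And>m. measure_pmf.prob P {D. m \<le> card D} \<le> M / 2 ^ m"
    using card_tail_bound by blast
  have "measure_pmf.prob P' {D'. C * (m + 1) ^ K < card D'} \<le> M / 2 ^ m" for m
  proof -
    have "measure_pmf.prob P' {D'. C * (m + 1) ^ K < card D'}
        = measure_pmf.prob P {D. C * (m + 1) ^ K < card (apply_view \<tau>' \<Phi> D)}"
      by (simp add: P' vimage_def)
    also have "\<dots> \<le> measure_pmf.prob P {D. m \<le> card D}"
    proof (rule measure_pmf.finite_measure_mono_AE)
      have "m \<le> card D" if "D \<in> set_pmf P" "C * (m + 1) ^ K < card (apply_view \<tau>' \<Phi> D)" for D
      proof (rule ccontr)
        assume "\<not> m \<le> card D"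
        then have "C * (card D + 1) ^ K \<le> C * (m + 1) ^ K" by (simp add: power_mono)
        then show False using CK[OF inst] that by (meson le_trans not_le)
      qed
      then show "AE D in measure_pmf P. D \<in> {D. C * (m + 1) ^ K < card (apply_view \<tau>' \<Phi> D)}
                   \<longrightarrow> D \<in> {D. m \<le> card D}"
        by (simp add: AE_measure_pmf_iff)
    qed simp
    also have "\<dots> \<le> M / 2 ^ m" by (rule M)
    finally show ?thesis .
  qed
  then show thesis by (rule that)
qed

section \<open>A PDB with finite moments outside FO(TI)\<close>

definition unary_schema :: schema where
  "unary_schema = [0 \<mapsto> 1]"

definition unary_instance :: "nat \<Rightarrow> db_instance" where
  "unary_instance k = (\<lambda>i. (0, [i])) ` {..<k}"

definition sqrt_exp_pdb :: "db_instance pmf" where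
  "sqrt_exp_pdb = map_pmf (\<lambda>n. unary_instance (2 ^ floor_sqrt n)) (geometric_pmf (1/2))"

lemma card_unary_instance: "card (unary_instance k) = k"
  unfolding unary_instance_def by (subst card_image) (auto simp: inj_on_def)

lemma pdb_sqrt_exp_pdb: "pdb unary_schema sqrt_exp_pdb"
  by (auto simp: pdb_def schema_def unary_schema_def sqrt_exp_pdb_def is_instance_def
      is_fact_def unary_instance_def)

lemma nn_integral_sqrt_exp_pdb:
  "(\<integral>\<^sup>+ D. f D \<partial>measure_pmf sqrt_exp_pdb)
     = (\<Sum>n. ennreal ((1/2) ^ Suc n) * f (unary_instance (2 ^ floor_sqrt n)))"
  unfolding sqrt_exp_pdb_def nn_integral_map_pmf
  by (simp add: nn_integral_measure_pmf nn_integral_count_space_nat mult.commute)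

lemma two_power_mult_floor_sqrt_le: "(2::real) ^ (k * floor_sqrt n) \<le> sqrt 2 ^ (k\<^sup>2 + n)"
proof -
  have "real (2 * (k * floor_sqrt n)) \<le> real (k\<^sup>2 + (floor_sqrt n)\<^sup>2)"
    using sum_squares_bound[of "real k" "real (floor_sqrt n)"] by (simp add: mult.assoc)
  then have "2 * (k * floor_sqrt n) \<le> k\<^sup>2 + (floor_sqrt n)\<^sup>2"
    by (simp only: of_nat_le_iff)
  also have "\<dots> \<le> k\<^sup>2 + n" by simp
  finally have "2 * (k * floor_sqrt n) \<le> k\<^sup>2 + n" .
  then have "sqrt 2 ^ (2 * (k * floor_sqrt n)) \<le> sqrt 2 ^ (k\<^sup>2 + n)"
    by (intro power_increasing) simp_all
  then show ?thesis by (simp add: power_mult)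
qed

lemma finite_moments_sqrt_exp_pdb: "finite_moments sqrt_exp_pdb"
  unfolding finite_moments_def
proof (intro allI impI)
  fix k :: nat
  define a where "a n = (1/2) ^ Suc n * real (2 ^ floor_sqrt n) ^ k" for n
  have "summable a"
  proof (rule summable_comparison_test')
    show "summable (\<lambda>n. sqrt 2 ^ k\<^sup>2 * (sqrt 2 / 2) ^ n)"
      by (intro summable_mult summable_geometric) (simp add: real_sqrt_less_iff[of 2 4, simplified])
    fix n
    have "a n \<le> (1/2) ^ n * real (2 ^ floor_sqrt n) ^ k"
      by (simp add: a_def)
    also have "\<dots> \<le> (1/2) ^ n * sqrt 2 ^ (k\<^sup>2 + n)"
      using two_power_mult_floor_sqrt_le[of k n]
      by (intro mult_left_mono) (simp_all add: power_mult mult.commute[of k])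
    also have "\<dots> = sqrt 2 ^ k\<^sup>2 * (sqrt 2 / 2) ^ n"
      by (simp add: power_add power_divide)
    finally show "norm (a n) \<le> sqrt 2 ^ k\<^sup>2 * (sqrt 2 / 2) ^ n"
      by (simp add: a_def)
  qed
  have "(\<integral>\<^sup>+ D. ennreal (real (card D) ^ k) \<partial>measure_pmf sqrt_exp_pdb) = (\<Sum>n. ennreal (a n))"
    by (simp add: nn_integral_sqrt_exp_pdb card_unary_instance a_def flip: ennreal_mult)
  also have "\<dots> = ennreal (suminf a)"
    by (rule suminf_ennreal2[OF _ \<open>summable a\<close>]) (simp add: a_def)
  finally show "(\<integral>\<^sup>+ D. ennreal (real (card D) ^ k) \<partial>measure_pmf sqrt_exp_pdb) < \<infinity>"
    by simp
qed

lemma prob_sqrt_exp_pdb_card_ge: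
  "(1/2) ^ Suc n \<le> measure_pmf.prob sqrt_exp_pdb {D. 2 ^ floor_sqrt n \<le> card D}"
proof -
  have "(1/2) ^ Suc n = measure_pmf.prob (geometric_pmf (1/2)) {n}"
    by (simp add: measure_pmf_single)
  also have "\<dots> \<le> measure_pmf.prob sqrt_exp_pdb {D. 2 ^ floor_sqrt n \<le> card D}"
    unfolding sqrt_exp_pdb_def measure_map_pmf
    by (intro measure_pmf.finite_measure_mono) (auto simp: card_unary_instance)
  finally show ?thesis .
qed

lemma not_in_FO_TI_sqrt_exp_pdb: "\<not> in_FO_TI unary_schema sqrt_exp_pdb"
proof
  assume "in_FO_TI unary_schema sqrt_exp_pdb"
  then obtain C K M
    where tail: "\<And>m. measure_pmf.prob sqrt_exp_pdb {D. C * (m + 1) ^ K < card D} \<le> M / 2 ^ m"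
    by (rule in_FO_TI_tail_bound) blast
  have "eventually (\<lambda>j::nat. real C * (1 + 2 * real j ^ 2) ^ K < 2 ^ j) at_top"
    by real_asymp
  moreover have "eventually (\<lambda>j::nat. 2 * M < 2 ^ j) at_top"
    by real_asymp
  ultimately have "eventually (\<lambda>j::nat. real C * (1 + 2 * real j ^ 2) ^ K < 2 ^ j \<and> 2 * M < 2 ^ j) at_top"
    by (rule eventually_conj)
  then obtain j where poly: "real C * (1 + 2 * real j ^ 2) ^ K < 2 ^ j" and big: "2 * M < 2 ^ j"
    using eventually_happens'[OF sequentially_bot] by blast
  define n where "n = j\<^sup>2"
  have "real (C * (2 * n + 1) ^ K) < real (2 ^ floor_sqrt n)"
    using poly by (simp add: n_def)
  then have "C * (2 * n + 1) ^ K < 2 ^ floor_sqrt n"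
    by (simp only: of_nat_less_iff)
  have "(1/2) ^ Suc n \<le> measure_pmf.prob sqrt_exp_pdb {D. 2 ^ floor_sqrt n \<le> card D}"
    by (rule prob_sqrt_exp_pdb_card_ge)
  also have "\<dots> \<le> measure_pmf.prob sqrt_exp_pdb {D. C * (2 * n + 1) ^ K < card D}"
    using \<open>C * (2 * n + 1) ^ K < 2 ^ floor_sqrt n\<close>
    by (intro measure_pmf.finite_measure_mono) auto
  also have "\<dots> \<le> M / 2 ^ (2 * n)"
    using tail[of "2 * n"] by simp
  finally have "(2::real) ^ n * 2 ^ n \<le> (2 * M) * 2 ^ n"
    by (simp add: power_mult field_simps power2_eq_square)
  then have "2 ^ n \<le> 2 * M"
    by (rule mult_right_le_imp_le) simp
  moreover have "(2::real) ^ j \<le> 2 ^ n"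
    unfolding n_def by (intro power_increasing) (simp_all add: power2_eq_square le_square)
  ultimately show False using big by linarith
qed

theorem theorem3p9:
  shows "\<exists>\<tau> P. pdb \<tau> P \<and> finite_moments P \<and> \<not> in_FO_TI \<tau> P"
  using pdb_sqrt_exp_pdb finite_moments_sqrt_exp_pdb not_in_FO_TI_sqrt_exp_pdb by blast

end
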